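(* Let $h_{r+1}(z)={}_2F_1(-r,r+1;2r+2;1-z)$. For each fixed $z\in(0,1)$, as $r\to\infty$, $$h_{r+1}(z)=[\rho(z)]^r\,C(z)\,\big(1+O(r^{-1})\big),$$ where $$\rho(z)=4\,\frac{(1-2z)(2-z)(1+z)+2(1-z+z^2)^{3/2}}{27(1-z)^2},\qquad C(z)=\frac{2z}{\sqrt{2(1-z+z^2)^2-(2-z)(1-2z)(1+z)\sqrt{1-z+z^2}}}.$$
   Context: $h_{r+1}(z)$ is the generating function $\sum_{k=1}^{r+1}H_{r+1}^{(k)}z^{k-1}$ of the refined alternating-sign-matrix enumeration, $H_{N}^{(k)}=\binom{N+k-2}{N-1}\binom{2N-1-k}{N-1}/\binom{3N-2}{N-1}$, equivalently ${}_2F_1(-N+1,N;2N;1-z)$ with $N=r+1$. *)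

theory Defs
  imports "HOL-Analysis.Analysis" "HOL-Library.Landau_Symbols"
begin

definition hyp2F1_term :: "nat \<Rightarrow> real \<Rightarrow> real \<Rightarrow> real \<Rightarrow> real" where
  "hyp2F1_term n b c x =
     (\<Sum>k\<le>n. pochhammer (- real n) k * pochhammer b k / (pochhammer c k * fact k) * x ^ k)"

text \<open>h_{r+1}(z) = 2F1(-r, r+1; 2r+2; 1-z).\<close>
definition h :: "nat \<Rightarrow> real \<Rightarrow> real" where
  "h r z = hyp2F1_term r (real r + 1) (2 * real r + 2) (1 - z)"

definition rho :: "real \<Rightarrow> real" where
  "rho z = 4 * ((1 - 2*z) * (2 - z) * (1 + z) + 2 * (1 - z + z^2) powr (3/2)) / (27 * (1 - z)^2)"

definition Cconst :: "real \<Rightarrow> real" where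
  "Cconst z = 2 * z / sqrt (2 * (1 - z + z^2)^2 - (2 - z) * (1 - 2*z) * (1 + z) * sqrt (1 - z + z^2))"

end

theory Submission
  imports Defs
begin

text \<open>Euler's integral gives h r z = (2r+1)!/(r!)^2 \<cdot> \<integral> f(t)^r dt over [0, 1], with
  f t = t (1 - t) (1 - a t) and a = 1 - z. The cubic f has a maximum f0 at an interior point
  t0, and rho z = 4 f0. The substitution t = t1 - x^2, with t1 the other root of f - f0,
  turns f into f0 (1 - W(x)^2) for a cubic W mapping [sqrt (t1 - 1), sqrt t1] onto [-1, 1].
  Writing the Jacobian 2x as (c0 + c1 W) W' + W^2 W' Q and substituting v = W(x), the first
  part contributes exactly c0 \<cdot> \<integral> (1 - v^2)^r dv over [-1, 1], which equals
  c0 \<cdot> 2 \<cdot> 4^r (r!)^2/(2r+1)! and cancels the Euler prefactor, while the second part is bounded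
  by the second moment \<integral> v^2 (1 - v^2)^r dv, smaller by the factor 1/(2r + 3).\<close>

lemma has_integral_power_mult_power_unit_interval:
  "((\<lambda>t::real. t^m * (1-t)^n) has_integral (fact m * fact n / fact (m+n+1))) {0..1}"
proof -
  have Beta: "((\<lambda>t. t powr (real m + 1 - 1) * (1 - t) powr (real n + 1 - 1)) has_integral
        Beta (real m + 1) (real n + 1)) {0..1}"
    by (rule has_integral_Beta_real) auto
  have "Beta (real m + 1) (real n + 1) = fact m * fact n / fact (m+n+1)"
    using Gamma_fact[of m, where 'a=real] Gamma_fact[of n, where 'a=real]
      Gamma_fact[of "m+n+1", where 'a=real]
    by (simp add: Beta_def add_ac)
  moreover have "((\<lambda>t::real. t^m * (1-t)^n) has_integral Beta (real m + 1) (real n + 1)) {0..1}"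
  proof (rule has_integral_spike_finite[OF _ _ Beta])
    fix t :: real assume "t \<in> {0..1} - {0,1}"
    then show "t^m * (1-t)^n = t powr (real m + 1 - 1) * (1 - t) powr (real n + 1 - 1)"
      by (simp add: powr_realpow)
  qed simp
  ultimately show ?thesis by simp
qed

lemma pochhammer_of_nat_plus_one_mult_fact:
  "pochhammer (of_nat m + 1) k * fact m = (fact (m + k) :: 'a :: {semiring_char_0, comm_semiring_1})"
proof (induction k)
  case (Suc k)
  have "pochhammer (of_nat m + 1) (Suc k) * fact m
      = pochhammer (of_nat m + 1) k * fact m * (of_nat (m + k) + 1 :: 'a)"
    by (simp add: pochhammer_Suc algebra_simps)
  also have "\<dots> = fact (Suc (m + k))"
    by (metis Suc.IH fact_Suc of_nat_Suc add.commute mult.commute)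
  finally show ?case by simp
qed simp

lemma hyp2F1_summand_eq_Beta:
  fixes r k :: nat and x :: real
  assumes "k \<le> r"
  shows "pochhammer (- real r) k * pochhammer (real r + 1) k / (pochhammer (2 * real r + 2) k * fact k) * x ^ k
    = fact (2*r+1) / (fact r)^2 * (real (r choose k) * (-x)^k * (fact (r+k) * fact r / fact (r+k+r+1)))"
proof -
  have "pochhammer (- real r) k = (-1)^k * pochhammer (real (r - k) + 1) k"
    using pochhammer_minus[of "real r" k] assms by (simp add: of_nat_diff)
  also have "pochhammer (real (r - k) + 1) k = fact r / fact (r - k)"
    using pochhammer_of_nat_plus_one_mult_fact[of "r - k" k, where 'a=real] assms
    by (simp add: field_simps)
  finally have p1: "pochhammer (- real r) k = (-1)^k * (fact r / fact (r - k))" .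
  have p2: "pochhammer (real r + 1) k = fact (r+k) / fact r"
    using pochhammer_of_nat_plus_one_mult_fact[of r k, where 'a=real] by (simp add: field_simps)
  have "pochhammer (real (2*r+1) + 1) k * fact (2*r+1) = fact (2*r+1+k)"
    by (rule pochhammer_of_nat_plus_one_mult_fact)
  moreover have "real (2*r+1) + 1 = 2 * real r + 2" "2*r+1+k = r+k+r+1" by simp_all
  ultimately have "pochhammer (2 * real r + 2) k * fact (2*r+1) = fact (r+k+r+1)"
    by (simp only:)
  then have p3: "pochhammer (2 * real r + 2) k = fact (r+k+r+1) / fact (2*r+1)"
    by (simp add: eq_divide_eq del: fact_Suc)
  have b: "real (r choose k) = fact r / (fact k * fact (r-k))"
    using binomial_fact[OF assms] by simp
  have field: "\<And>A B Cf D E K s y::real. A\<noteq>0 \<Longrightarrow> B\<noteq>0 \<Longrightarrow> E\<noteq>0 \<Longrightarrow> D\<noteq>0 \<Longrightarrow> K\<noteq>0 \<Longrightarrow>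
     s*(A/B) * (Cf/A) / ((E/D) * K) * y = D/A^2 * ((A/(K*B)) * (s*y) * (Cf*A/E))"
    by (simp add: field_simps power2_eq_square)
  show ?thesis unfolding p1 p2 p3 b power_minus[of x k]
    by (rule field) auto
qed

lemma hyp2F1_term_Euler_integral:
  fixes r :: nat and x :: real
  shows "hyp2F1_term r (real r + 1) (2 * real r + 2) x
     = fact (2*r+1) / (fact r)^2 * integral {0..1} (\<lambda>t. (t*(1-t)*(1-x*t))^r)"
proof -
  have expand: "(t*(1-t)*(1-x*t))^r = (\<Sum>k\<le>r. (real (r choose k) * (-x)^k) * (t^(r+k) * (1-t)^r))"
    for t :: real
  proof -
    have "(1 - x*t)^r = (\<Sum>k\<le>r. real (r choose k) * (-x)^k * t^k)"
      using binomial_ring[of "-x*t" 1 r] by (simp add: mult.assoc flip: power_mult_distrib)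
    then have "(t*(1-t)*(1-x*t))^r = t^r * (1-t)^r * (\<Sum>k\<le>r. real (r choose k) * (-x)^k * t^k)"
      by (simp add: power_mult_distrib)
    also have "\<dots> = (\<Sum>k\<le>r. (real (r choose k) * (-x)^k) * (t^(r+k) * (1-t)^r))"
      by (simp add: sum_distrib_left power_add algebra_simps)
    finally show ?thesis .
  qed
  have Beta: "((\<lambda>t. (t*(1-t)*(1-x*t))^r) has_integral
      (\<Sum>k\<le>r. (real (r choose k) * (-x)^k) * (fact (r+k) * fact r / fact (r+k+r+1)))) {0..1}"
    unfolding expand
    by (intro has_integral_sum finite_atMost has_integral_mult_right
        has_integral_power_mult_power_unit_interval)
  have "hyp2F1_term r (real r + 1) (2 * real r + 2) x = (\<Sum>k\<le>r. fact (2*r+1) / (fact r)^2 *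
      (real (r choose k) * (-x)^k * (fact (r+k) * fact r / fact (r+k+r+1))))"
    unfolding hyp2F1_term_def by (intro sum.cong refl hyp2F1_summand_eq_Beta) simp
  then show ?thesis
    using integral_unique[OF Beta] by (simp add: sum_distrib_left mult.assoc)
qed

definition wallis_integral :: "nat \<Rightarrow> real" where
  "wallis_integral r = integral {-1..1} (\<lambda>v. (1 - v^2)^r)"

lemma has_integral_wallis_integral:
  "((\<lambda>v::real. (1 - v^2)^r) has_integral wallis_integral r) {-1..1}"
  unfolding wallis_integral_def
  by (intro integrable_integral integrable_continuous_real continuous_intros)

lemma wallis_integral_eq: "wallis_integral r = 2 * 4^r * (fact r)^2 / fact (2*r+1)"
proof -
  have subst: "((\<lambda>t. 2 *\<^sub>R (\<lambda>v::real. (1 - v^2)^r) (2*t-1)) has_integral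
      integral {2*0-1..2*1-1} (\<lambda>v::real. (1 - v^2)^r)) {0..1::real}"
  proof (rule has_integral_substitution[where c="-1" and d=1])
    show "continuous_on {-1..1} (\<lambda>v::real. (1 - v^2)^r)" by (intro continuous_intros)
    fix t :: real assume "t \<in> {0..1}"
    show "((\<lambda>t. 2*t-1) has_field_derivative 2) (at t within {0..1})"
      by (auto intro!: derivative_eq_intros)
  qed auto
  have integrand: "2 *\<^sub>R (\<lambda>v::real. (1 - v^2)^r) (2*t-1) = 2 * 4^r * (t^r * (1-t)^r)" for t :: real
  proof -
    have "1 - (2*t-1)^2 = 4*(t*(1-t))" by (simp add: power2_eq_square algebra_simps)
    then show ?thesis by (simp add: power_mult_distrib)
  qed
  have "((\<lambda>t::real. 2 * 4^r * (t^r * (1-t)^r)) has_integral wallis_integral r) {0..1}"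
    using subst unfolding integrand wallis_integral_def by simp
  moreover have "((\<lambda>t::real. 2 * 4^r * (t^r * (1-t)^r)) has_integral
      2 * 4^r * (fact r * fact r / fact (r+r+1))) {0..1}"
    by (intro has_integral_mult_right has_integral_power_mult_power_unit_interval)
  ultimately have "wallis_integral r = 2 * 4^r * (fact r * fact r / fact (r+r+1))"
    by (rule has_integral_unique)
  moreover have "r + r + 1 = 2*r+1" by simp
  ultimately show ?thesis by (simp only: power2_eq_square times_divide_eq_right)
qed

lemma wallis_integral_pos: "0 < wallis_integral r"
  unfolding wallis_integral_eq by simp

lemma has_integral_odd_moment_wallis:
  "((\<lambda>v::real. (1 - v^2)^r * v) has_integral 0) {-1..1}"
proof -
  have "((\<lambda>v::real. (1 - v^2)^r * v) has_integral
      (\<lambda>v. (1 - v^2)^(Suc r) * (-1 / (2 * (real r + 1)))) 1 - (\<lambda>v. (1 - v^2)^(Suc r) * (-1 / (2 * (real r + 1)))) (-1))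
      {-1..1}"
  proof (rule fundamental_theorem_of_calculus)
    fix x :: real assume "x \<in> {-1..1}"
    show "((\<lambda>v. (1 - v^2)^(Suc r) * (-1 / (2 * (real r + 1)))) has_vector_derivative (1 - x^2)^r * x)
        (at x within {-1..1})"
      unfolding has_real_derivative_iff_has_vector_derivative[symmetric]
      by (rule derivative_eq_intros refl | simp)+ (simp add: field_simps power2_eq_square)
  qed simp
  then show ?thesis by simp
qed

lemma has_integral_second_moment_wallis:
  "((\<lambda>v::real. v^2 * (1 - v^2)^r) has_integral wallis_integral r / (2 * real r + 3)) {-1..1}"
proof -
  have "((\<lambda>v::real. (1 - v^2)^r - (2 * real r + 3) * (v^2 * (1 - v^2)^r)) has_integral
      (\<lambda>v. v * (1 - v^2)^Suc r) 1 - (\<lambda>v. v * (1 - v^2)^Suc r) (-1)) {-1..1}"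
  proof (rule fundamental_theorem_of_calculus)
    fix x :: real assume "x \<in> {-1..1}"
    show "((\<lambda>v. v * (1 - v^2)^Suc r) has_vector_derivative
        (1 - x^2)^r - (2 * real r + 3) * (x^2 * (1 - x^2)^r)) (at x within {-1..1})"
      unfolding has_real_derivative_iff_has_vector_derivative[symmetric]
      by (rule derivative_eq_intros refl | simp)+ (simp add: algebra_simps power2_eq_square)
  qed simp
  then have by_parts: "((\<lambda>v::real. (1 - v^2)^r - (2 * real r + 3) * (v^2 * (1 - v^2)^r))
      has_integral 0) {-1..1}"
    by simp
  have "(\<lambda>v::real. v^2 * (1 - v^2)^r) integrable_on {-1..1}"
    by (intro integrable_continuous_real continuous_intros)
  then obtain J where J: "((\<lambda>v::real. v^2 * (1 - v^2)^r) has_integral J) {-1..1}"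
    by (auto simp: integrable_on_def)
  have "((\<lambda>v::real. (1 - v^2)^r - (2 * real r + 3) * (v^2 * (1 - v^2)^r)) has_integral
      wallis_integral r - (2 * real r + 3) * J) {-1..1}"
    by (intro has_integral_diff has_integral_wallis_integral has_integral_mult_right J)
  then have "wallis_integral r - (2 * real r + 3) * J = 0"
    using by_parts by (rule has_integral_unique)
  then have "J = wallis_integral r / (2 * real r + 3)"
    by (simp add: field_simps)
  with J show ?thesis by simp
qed

lemma bigo_inverse_of_bound:
  fixes g :: "nat \<Rightarrow> real"
  assumes "\<And>r. \<bar>g r\<bar> \<le> M / (2 * real r + 3)"
  shows "g \<in> O[sequentially](\<lambda>r. 1 / real r)"
proof (rule bigoI)
  show "\<forall>\<^sub>F r in sequentially. norm (g r) \<le> \<bar>M\<bar> * norm (1 / real r)"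
  proof (rule eventually_sequentiallyI[of 1])
    fix r :: nat assume r: "1 \<le> r"
    have "\<bar>g r\<bar> \<le> \<bar>M\<bar> / (2 * real r + 3)"
      by (rule order_trans[OF assms[of r]]) (intro divide_right_mono abs_ge_self, simp)
    also have "\<dots> \<le> \<bar>M\<bar> / real r"
      using r by (intro divide_left_mono) auto
    finally show "norm (g r) \<le> \<bar>M\<bar> * norm (1 / real r)"
      by simp
  qed
qed

locale unit_interval_parametrization =
  fixes \<alpha> \<beta> :: real and W W' :: "real \<Rightarrow> real"
  assumes ordered: "\<alpha> \<le> \<beta>"
    and W_deriv: "\<And>x. x \<in> {\<alpha>..\<beta>} \<Longrightarrow> (W has_field_derivative W' x) (at x within {\<alpha>..\<beta>})"
    and W'_continuous: "continuous_on {\<alpha>..\<beta>} W'"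
    and W'_nonneg: "\<And>x. x \<in> {\<alpha>..\<beta>} \<Longrightarrow> 0 \<le> W' x"
    and W_left: "W \<alpha> = -1" and W_right: "W \<beta> = 1"
    and W_image: "W ` {\<alpha>..\<beta>} \<subseteq> {-1..1}"
begin

lemma W_continuous: "continuous_on {\<alpha>..\<beta>} W"
  using W_deriv by (rule DERIV_continuous_on)

lemma has_integral_substitution_W:
  assumes "continuous_on {-1..1} F"
  shows "((\<lambda>x. W' x * F (W x)) has_integral integral {-1..1} F) {\<alpha>..\<beta>}"
  using has_integral_substitution[OF ordered _ W_image assms W_deriv] W_left W_right by simp

lemma has_integral_leading_term:
  "((\<lambda>x. (1 - (W x)^2)^r * ((c0 + c1 * W x) * W' x)) has_integral c0 * wallis_integral r) {\<alpha>..\<beta>}"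
proof -
  have "((\<lambda>v::real. c0 * (1 - v^2)^r + c1 * ((1 - v^2)^r * v)) has_integral
      c0 * wallis_integral r + c1 * 0) {-1..1}"
    by (intro has_integral_add has_integral_mult_right has_integral_wallis_integral
        has_integral_odd_moment_wallis)
  then have "integral {-1..1} (\<lambda>v. c0 * (1 - v^2)^r + c1 * ((1 - v^2)^r * v)) = c0 * wallis_integral r"
    by (simp add: integral_unique)
  with has_integral_substitution_W[of "\<lambda>v. c0 * (1 - v^2)^r + c1 * ((1 - v^2)^r * v)"]
  show ?thesis by (simp add: continuous_intros algebra_simps)
qed

lemma remainder_term_bound:
  assumes Q_continuous: "continuous_on {\<alpha>..\<beta>} Q"
    and Q_bound: "\<And>x. x \<in> {\<alpha>..\<beta>} \<Longrightarrow> \<bar>Q x\<bar> \<le> M"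
  shows "\<bar>integral {\<alpha>..\<beta>} (\<lambda>x. (1 - (W x)^2)^r * ((W x)^2 * W' x * Q x))\<bar>
    \<le> M * wallis_integral r / (2 * real r + 3)"
proof -
  have second_moment: "((\<lambda>x. M * (W' x * ((W x)^2 * (1 - (W x)^2)^r))) has_integral
      M * (wallis_integral r / (2 * real r + 3))) {\<alpha>..\<beta>}"
    using has_integral_substitution_W[of "\<lambda>v. v^2 * (1 - v^2)^r"]
      integral_unique[OF has_integral_second_moment_wallis]
    by (intro has_integral_mult_right) (simp add: continuous_intros)
  have "norm (integral {\<alpha>..\<beta>} (\<lambda>x. (1 - (W x)^2)^r * ((W x)^2 * W' x * Q x)))
      \<le> integral {\<alpha>..\<beta>} (\<lambda>x. M * (W' x * ((W x)^2 * (1 - (W x)^2)^r)))"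
  proof (rule integral_norm_bound_integral)
    show "(\<lambda>x. (1 - (W x)^2)^r * ((W x)^2 * W' x * Q x)) integrable_on {\<alpha>..\<beta>}"
      using W_continuous W'_continuous Q_continuous
      by (intro integrable_continuous_real continuous_intros)
    show "(\<lambda>x. M * (W' x * ((W x)^2 * (1 - (W x)^2)^r))) integrable_on {\<alpha>..\<beta>}"
      using second_moment by blast
  next
    fix x assume x: "x \<in> {\<alpha>..\<beta>}"
    have "W x \<in> {-1..1}"
      using W_image x by blast
    then have "\<bar>W x\<bar> \<le> 1"
      by (simp add: abs_le_iff)
    then have power_nonneg: "0 \<le> (1 - (W x)^2)^r"
      by (simp add: abs_square_le_1)
    then have weight_nonneg: "0 \<le> W' x * ((W x)^2 * (1 - (W x)^2)^r)"
      using W'_nonneg[OF x] by simp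
    have "norm ((1 - (W x)^2)^r * ((W x)^2 * W' x * Q x))
        = \<bar>Q x\<bar> * (W' x * ((W x)^2 * (1 - (W x)^2)^r))"
      using power_nonneg W'_nonneg[OF x] by (simp add: abs_mult abs_of_nonneg algebra_simps)
    also have "\<dots> \<le> M * (W' x * ((W x)^2 * (1 - (W x)^2)^r))"
      using Q_bound[OF x] weight_nonneg by (rule mult_right_mono)
    finally show "norm ((1 - (W x)^2)^r * ((W x)^2 * W' x * Q x))
        \<le> M * (W' x * ((W x)^2 * (1 - (W x)^2)^r))" .
  qed
  with integral_unique[OF second_moment] show ?thesis by simp
qed

lemma power_weight_integral_estimate:
  assumes Q_continuous: "continuous_on {\<alpha>..\<beta>} Q"
    and decomposition:
      "\<And>x. x \<in> {\<alpha>..\<beta>} \<Longrightarrow> \<phi> x = (c0 + c1 * W x) * W' x + (W x)^2 * W' x * Q x"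
  obtains M where "\<And>r. \<bar>integral {\<alpha>..\<beta>} (\<lambda>x. (1 - (W x)^2)^r * \<phi> x) - c0 * wallis_integral r\<bar>
    \<le> M * wallis_integral r / (2 * real r + 3)"
proof -
  have "bounded (Q ` {\<alpha>..\<beta>})"
    by (intro compact_imp_bounded compact_continuous_image Q_continuous compact_Icc)
  then obtain M where M: "\<And>x. x \<in> {\<alpha>..\<beta>} \<Longrightarrow> \<bar>Q x\<bar> \<le> M"
    unfolding bounded_iff by (metis imageI real_norm_def)
  have "\<bar>integral {\<alpha>..\<beta>} (\<lambda>x. (1 - (W x)^2)^r * \<phi> x) - c0 * wallis_integral r\<bar>
      \<le> M * wallis_integral r / (2 * real r + 3)" for r
  proof -
    let ?E = "\<lambda>x. (1 - (W x)^2)^r * ((W x)^2 * W' x * Q x)"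
    have "?E integrable_on {\<alpha>..\<beta>}"
      using W_continuous W'_continuous Q_continuous
      by (intro integrable_continuous_real continuous_intros)
    then have "((\<lambda>x. (1 - (W x)^2)^r * ((c0 + c1 * W x) * W' x) + ?E x) has_integral
        c0 * wallis_integral r + integral {\<alpha>..\<beta>} ?E) {\<alpha>..\<beta>}"
      by (intro has_integral_add has_integral_leading_term integrable_integral)
    then have "((\<lambda>x. (1 - (W x)^2)^r * \<phi> x) has_integral
        c0 * wallis_integral r + integral {\<alpha>..\<beta>} ?E) {\<alpha>..\<beta>}"
      by (rule has_integral_eq[rotated]) (simp add: decomposition algebra_simps)
    then show ?thesis
      using remainder_term_bound[OF Q_continuous M, of r] by (simp add: integral_unique)
  qed
  then show ?thesis by (rule that)
qed

end

locale Euler_cubic =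
  fixes a :: real
  assumes a_pos: "0 < a" and a_less_one: "a < 1"
begin

definition "f t = t * (1 - t) * (1 - a * t)"
definition "D = 1 - a + a^2"
definition "sqrtD = sqrt D"

text \<open>t0 is the critical point of f in (0,1); f - f t0 has the double root t0 and the simple
  root t1, so t1 + 2 t0 = (1 + a)/a by Vieta.\<close>
definition "t0 = (1 + a - sqrtD) / (3 * a)"
definition "t1 = (1 + a) / a - 2 * t0"
definition "f0 = f t0"
definition "d = t1 - t0"
definition "\<sigma> = sqrt d"
definition "k = sqrt (a / f0)"
definition "xlo = sqrt (t1 - 1)"
definition "xhi = sqrt t1"

text \<open>W is chosen so that f (t1 - x^2) = f0 (1 - W(x)^2).\<close>
definition "W x = k * x * (x^2 - d)"
definition "W' x = k * (3 * x^2 - d)"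

text \<open>c0 and c1 make 2x - (c0 + c1 W) W' vanish to second order at the zero \<sigma> of W,
  so that its quotient Q by W^2 W' is continuous on [xlo, xhi].\<close>
definition "c0 = 1 / (k * \<sigma>)"
definition "c1 = -1 / (k^2 * \<sigma>^4)"
definition "Q x = (15*\<sigma>^3 + 26*\<sigma>^2*(x-\<sigma>) + 15*\<sigma>*(x-\<sigma>)^2 + 3*(x-\<sigma>)^3) /
    (\<sigma>^4 * k^2 * x^2 * (x + \<sigma>)^2 * W' x)"

lemma D_pos: "0 < D"
  unfolding D_def using a_pos a_less_one by (simp add: add_pos_nonneg)

lemma sqrtD_pos: "0 < sqrtD" and sqrtD_sq: "sqrtD^2 = D"
  using D_pos unfolding sqrtD_def by auto

lemma sqrtD_less: "sqrtD < 1 + a"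
proof -
  have "sqrtD^2 < (1 + a)^2"
    using sqrtD_sq a_pos unfolding D_def by (simp add: power2_eq_square algebra_simps)
  then show ?thesis
    by (rule power_less_imp_less_base) (use a_pos in simp)
qed

lemma sqrtD_greater: "\<bar>2 * a - 1\<bar> < sqrtD"
proof -
  have "a * a < a * 1" using mult_strict_left_mono[OF a_less_one a_pos] .
  then have "(2 * a - 1)^2 < D" unfolding D_def by (simp add: power2_eq_square algebra_simps)
  then show ?thesis unfolding sqrtD_def using real_sqrt_less_mono by fastforce
qed

lemma d_eq: "d = sqrtD / a"
  unfolding d_def t1_def t0_def using a_pos by (simp add: field_simps)

lemma d_pos: "0 < d"
  using d_eq sqrtD_pos a_pos by simp

lemma t1_eq: "t1 = (1 + a + 2 * sqrtD) / (3 * a)"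
  unfolding t1_def t0_def using a_pos by (simp add: field_simps)

lemma t0_pos: "0 < t0"
  unfolding t0_def using sqrtD_less a_pos by simp

lemma t0_less_one: "t0 < 1"
  unfolding t0_def using sqrtD_greater a_pos by (simp add: field_simps abs_less_iff)

lemma one_less_t1: "1 < t1"
  unfolding t1_eq using a_pos a_less_one sqrtD_pos sqrtD_greater by (simp add: field_simps abs_less_iff)

lemma d_less: "d < 3 * (t1 - 1)"
proof -
  have "3 * (t1 - 1) - d = (1 - 2 * a + sqrtD) / a"
    unfolding d_eq t1_eq using a_pos by (simp add: field_simps)
  moreover have "0 < 1 - 2 * a + sqrtD"
    using sqrtD_greater by (simp add: abs_less_iff)
  ultimately show ?thesis
    using a_pos by (metis divide_pos_pos diff_gt_0_iff_gt)
qed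

lemma critical_point: "3 * a * t0^2 - 2 * (1 + a) * t0 + 1 = 0"
  unfolding t0_def using a_pos sqrtD_sq unfolding D_def
  by (simp add: field_simps power2_eq_square) algebra

lemma f_minus_f0: "f t - f0 = a * (t - t0)^2 * (t - t1)"
proof -
  have "f t - f0 - a * (t - t0)^2 * (t - t1) = (t - t0) * (3 * a * t0^2 - 2 * (1 + a) * t0 + 1)"
    unfolding f_def f0_def t1_def using a_pos by (simp add: field_simps power2_eq_square)
  then show ?thesis using critical_point by simp
qed

lemma f_nonneg: "0 \<le> t \<Longrightarrow> t \<le> 1 \<Longrightarrow> 0 \<le> f t"
  unfolding f_def using a_pos a_less_one mult_le_one[of a t] by simp

lemma f0_pos: "0 < f0"
proof -
  have "a * t0 < a * 1" using mult_strict_left_mono[OF t0_less_one a_pos] .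
  then show ?thesis unfolding f0_def f_def using t0_pos t0_less_one a_less_one
    by (intro mult_pos_pos) auto
qed

lemma f0_eq_at_zero: "a * t1 * t0^2 = f0"
  using f_minus_f0[of 0] by (simp add: f_def algebra_simps)

lemma f0_eq_at_one: "a * (1 - t0)^2 * (t1 - 1) = f0"
  using f_minus_f0[of 1] by (simp add: f_def algebra_simps power2_eq_square)

lemma k_pos: "0 < k" and k_sq: "k^2 = a / f0"
  unfolding k_def using a_pos f0_pos by auto

lemma \<sigma>_pos: "0 < \<sigma>" and \<sigma>_sq: "\<sigma>^2 = d"
  unfolding \<sigma>_def using d_pos by auto

lemma xlo_pos: "0 < xlo" and xlo_sq: "xlo^2 = t1 - 1"
  unfolding xlo_def using one_less_t1 by auto

lemma xhi_pos: "0 < xhi" and xhi_sq: "xhi^2 = t1"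
  unfolding xhi_def using one_less_t1 by auto

lemma xlo_le_xhi: "xlo \<le> xhi"
  unfolding xlo_def xhi_def by simp

lemma W_xhi: "W xhi = 1"
proof -
  have "(k * xhi * t0)^2 = 1"
    unfolding power_mult_distrib k_sq xhi_sq using f0_eq_at_zero f0_pos by (simp add: field_simps)
  moreover have "0 < k * xhi * t0" using k_pos xhi_pos t0_pos by simp
  moreover have "W xhi = k * xhi * t0" unfolding W_def xhi_sq d_def by simp
  ultimately show ?thesis using power2_eq_1_iff by fastforce
qed

lemma W_xlo: "W xlo = -1"
proof -
  have "(k * xlo * (1 - t0))^2 = 1"
    unfolding power_mult_distrib k_sq xlo_sq using f0_eq_at_one f0_pos by (simp add: field_simps)
  moreover have "0 < k * xlo * (1 - t0)" using k_pos xlo_pos t0_less_one by simp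
  moreover have "W xlo = - (k * xlo * (1 - t0))" unfolding W_def xlo_sq d_def by (simp add: algebra_simps)
  ultimately show ?thesis using power2_eq_1_iff by fastforce
qed

lemma W'_pos: "xlo \<le> x \<Longrightarrow> 0 < W' x"
  unfolding W'_def using k_pos d_less xlo_sq power_mono[of xlo x 2] xlo_pos by simp

lemma f_parametrization: "f (t1 - x^2) = f0 * (1 - (W x)^2)"
proof -
  have "f (t1 - x^2) = f0 - a * x^2 * (x^2 - d)^2"
    using f_minus_f0[of "t1 - x^2"] unfolding d_def by (simp add: power2_eq_square algebra_simps)
  also have "\<dots> = f0 * (1 - (W x)^2)"
    unfolding W_def power_mult_distrib k_sq using f0_pos by (simp add: field_simps)
  finally show ?thesis .
qed

lemma parameter_range: "x \<in> {xlo..xhi} \<Longrightarrow> t1 - x^2 \<in> {0..1}"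
  using xlo_pos xlo_sq xhi_sq power_mono[of xlo x 2] power_mono[of x xhi 2] by auto

lemma W_image: "W ` {xlo..xhi} \<subseteq> {-1..1}"
proof
  fix w assume "w \<in> W ` {xlo..xhi}"
  then obtain x where x: "x \<in> {xlo..xhi}" and w: "w = W x" by blast
  have "0 \<le> f (t1 - x^2)"
    using parameter_range[OF x] f_nonneg by simp
  then have "0 \<le> f0 * (1 - (W x)^2)"
    unfolding f_parametrization .
  then have "(W x)^2 \<le> 1" using f0_pos by (simp add: zero_le_mult_iff)
  then show "w \<in> {-1..1}" unfolding w using abs_square_le_1 by (auto simp: abs_le_iff)
qed

lemma W_deriv: "(W has_field_derivative W' x) (at x within S)"
  unfolding W_def W'_def
  by (rule derivative_eq_intros refl | simp)+ (simp add: algebra_simps power2_eq_square)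

lemma W'_continuous: "continuous_on S W'"
  unfolding W'_def by (intro continuous_intros)

sublocale unit_interval_parametrization xlo xhi W W'
  using xlo_le_xhi W_deriv W'_continuous W'_pos W_xlo W_xhi W_image
  by unfold_locales (auto intro: less_imp_le)

lemma Q_continuous: "continuous_on {xlo..xhi} Q"
proof -
  have "\<sigma>^4 * k^2 * x^2 * (x + \<sigma>)^2 * W' x \<noteq> 0" if "x \<in> {xlo..xhi}" for x
    using that W'_pos xlo_pos \<sigma>_pos k_pos by (auto simp: add_pos_pos less_imp_neq[symmetric])
  then show ?thesis unfolding Q_def W'_def by (intro continuous_intros) auto
qed

lemma jacobian_decomposition:
  assumes "x \<in> {xlo..xhi}"
  shows "2 * x = (c0 + c1 * W x) * W' x + (W x)^2 * W' x * Q x"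
proof -
  have x_pos: "0 < x" and W'_ne: "W' x \<noteq> 0"
    using assms xlo_pos W'_pos by (auto simp: less_imp_neq[symmetric])
  define R where "R = 15*\<sigma>^3 + 26*\<sigma>^2*(x-\<sigma>) + 15*\<sigma>*(x-\<sigma>)^2 + 3*(x-\<sigma>)^3"
  have W: "W x = k * x * (x^2 - \<sigma>^2)" and W': "W' x = k * (3*x^2 - \<sigma>^2)"
    unfolding W_def W'_def \<sigma>_sq by simp_all
  have leading: "(c0 + c1 * W x) * W' x = (\<sigma>^3 - x*(x^2-\<sigma>^2)) * (3*x^2-\<sigma>^2) / \<sigma>^4"
    unfolding c0_def c1_def W W' using k_pos \<sigma>_pos
    by (simp add: field_simps power2_eq_square power4_eq_xxxx power3_eq_cube)
  have "(W x)^2 = k^2 * x^2 * (x+\<sigma>)^2 * (x-\<sigma>)^2"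
    unfolding W by (simp add: power2_eq_square algebra_simps)
  moreover have "Q x = R / (\<sigma>^4 * k^2 * x^2 * (x + \<sigma>)^2 * W' x)"
    unfolding Q_def R_def ..
  ultimately have quadratic: "(W x)^2 * W' x * Q x = (x-\<sigma>)^2 * R / \<sigma>^4"
    using k_pos \<sigma>_pos x_pos W'_ne by (simp add: field_simps add_pos_pos)
  have "2*x*\<sigma>^4 - (\<sigma>^3 - x*(x^2-\<sigma>^2)) * (3*x^2-\<sigma>^2) = (x-\<sigma>)^2 * R"
    unfolding R_def by (simp add: power2_eq_square power4_eq_xxxx power3_eq_cube algebra_simps)
  moreover have "\<And>P. 2*x = P/\<sigma>^4 + (2*x*\<sigma>^4 - P)/\<sigma>^4"
    using \<sigma>_pos by (simp add: field_simps)
  ultimately show ?thesis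
    unfolding leading quadratic by metis
qed

lemma f_power_integral:
  "integral {0..1} (\<lambda>t. f t ^ r) = f0^r * integral {xlo..xhi} (\<lambda>x. (1 - (W x)^2)^r * (2 * x))"
proof -
  have derivative: "((\<lambda>x. t1 - x^2) has_field_derivative (-2 * x)) (at x within {xlo..xhi})" for x
    by (rule derivative_eq_intros refl | simp)+
  have "((\<lambda>x. (-2 * x) *\<^sub>R f (t1 - x^2)^r) has_integral
      integral {t1 - xlo^2..t1 - xhi^2} (\<lambda>t. f t ^ r) - integral {t1 - xhi^2..t1 - xlo^2} (\<lambda>t. f t ^ r))
      {xlo..xhi}"
    using derivative parameter_range
    by (intro has_integral_substitution_general[where s="{}" and c=0 and d=1, OF _ xlo_le_xhi])
      (auto simp: f_def intro!: continuous_intros)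
  then have "((\<lambda>x. (-2 * x) * f (t1 - x^2)^r) has_integral - integral {0..1} (\<lambda>t. f t ^ r)) {xlo..xhi}"
    unfolding xlo_sq xhi_sq using one_less_t1 by simp
  from has_integral_neg[OF this]
  have "((\<lambda>x. f0^r * ((1 - (W x)^2)^r * (2 * x))) has_integral integral {0..1} (\<lambda>t. f t ^ r)) {xlo..xhi}"
    by (simp add: f_parametrization power_mult_distrib mult_ac)
  then have "integral {xlo..xhi} (\<lambda>x. f0^r * ((1 - (W x)^2)^r * (2 * x))) = integral {0..1} (\<lambda>t. f t ^ r)"
    by (rule integral_unique)
  then show ?thesis
    by simp
qed

definition "remainder r =
  (integral {xlo..xhi} (\<lambda>x. (1 - (W x)^2)^r * (2 * x)) - c0 * wallis_integral r) / (c0 * wallis_integral r)"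

lemma c0_pos: "0 < c0"
  unfolding c0_def using k_pos \<sigma>_pos by simp

lemma remainder_bound: obtains M where "\<And>r. \<bar>remainder r\<bar> \<le> M / (2 * real r + 3)"
proof -
  obtain M where M: "\<And>r. \<bar>integral {xlo..xhi} (\<lambda>x. (1 - (W x)^2)^r * (2 * x)) - c0 * wallis_integral r\<bar>
      \<le> M * wallis_integral r / (2 * real r + 3)"
    using power_weight_integral_estimate[OF Q_continuous jacobian_decomposition] by blast
  have "\<bar>remainder r\<bar> \<le> (M / c0) / (2 * real r + 3)" for r
  proof -
    have normaliser_pos: "0 < c0 * wallis_integral r"
      using c0_pos wallis_integral_pos by simp
    then have "\<bar>remainder r\<bar> =
        \<bar>integral {xlo..xhi} (\<lambda>x. (1 - (W x)^2)^r * (2 * x)) - c0 * wallis_integral r\<bar>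
          / (c0 * wallis_integral r)"
      by (simp add: remainder_def abs_divide)
    also have "\<dots> \<le> (M * wallis_integral r / (2 * real r + 3)) / (c0 * wallis_integral r)"
      using M[of r] normaliser_pos by (intro divide_right_mono) auto
    also have "\<dots> = (M / c0) / (2 * real r + 3)"
      using c0_pos wallis_integral_pos[of r] by (simp add: divide_simps)
    finally show ?thesis .
  qed
  then show ?thesis by (rule that)
qed

lemma h_eq_remainder:
  "h r (1 - a) = (4 * f0)^r * (2 * c0) * (1 + remainder r)"
proof -
  have "h r (1 - a) = 2 * 4^r / wallis_integral r * integral {0..1} (\<lambda>t. f t ^ r)"
    unfolding h_def hyp2F1_term_Euler_integral wallis_integral_eq f_def by simp
  also have "\<dots> = (4 * f0)^r * (2 * c0) * (1 + remainder r)"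
    unfolding f_power_integral remainder_def
    using c0_pos wallis_integral_pos[of r] by (simp add: field_simps power_mult_distrib)
  finally show ?thesis .
qed

lemma f0_eq: "27 * a^2 * f0 = (2*a - 1) * (1 + a) * (2 - a) + 2 * D * sqrtD"
  unfolding f0_def f_def t0_def using a_pos sqrtD_sq unfolding D_def
  by (simp add: field_simps power2_eq_square power3_eq_cube) algebra

lemma D_eq: "1 - (1 - a) + (1 - a)^2 = D"
  unfolding D_def by (simp add: power2_eq_square algebra_simps)

lemma rho_eq: "rho (1 - a) = 4 * f0"
proof -
  have "D powr (3/2) = D powr (1 + 1/2)"
    by simp
  also have "\<dots> = D powr 1 * D powr (1/2)"
    by (rule powr_add)
  also have "\<dots> = D * sqrtD"
    unfolding sqrtD_def using D_pos by (simp add: powr_half_sqrt)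
  finally have "rho (1 - a) = 4 * ((2*a - 1) * (1 + a) * (2 - a) + 2 * D * sqrtD) / (27 * a^2)"
    unfolding rho_def D_eq by (simp add: algebra_simps)
  also have "\<dots> = 4 * f0"
    unfolding f0_eq[symmetric] using a_pos by simp
  finally show ?thesis .
qed

lemma Cconst_eq: "Cconst (1 - a) = 2 * c0"
proof -
  define X where "X = 2 * D^2 - (1 + a) * (2*a - 1) * (2 - a) * sqrtD"
  have C_X: "Cconst (1 - a) = 2 * (1 - a) / sqrt X"
    unfolding Cconst_def X_def D_eq sqrtD_def by (simp add: algebra_simps)
  have "27 * a^2 * (f0 * X) = ((2*a - 1) * (1 + a) * (2 - a) + 2 * D * sqrtD) * X"
    by (simp add: f0_eq[symmetric])
  also have "\<dots> = 27 * a^2 * ((1 - a)^2 * sqrtD)"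
    unfolding X_def using sqrtD_sq unfolding D_def by algebra
  finally have X_eq: "X = (1 - a)^2 * (sqrtD / f0)"
    using a_pos f0_pos by (simp add: field_simps)
  have sqrt_X: "sqrt X = (1 - a) * sqrt (sqrtD / f0)"
    unfolding X_eq real_sqrt_mult using a_less_one by simp
  have k_\<sigma>: "k * \<sigma> = sqrt (sqrtD / f0)"
    unfolding k_def \<sigma>_def d_eq using a_pos f0_pos by (simp add: real_sqrt_mult[symmetric] field_simps)
  have "1 - a \<noteq> 0" "sqrt (sqrtD / f0) \<noteq> 0"
    using a_less_one sqrtD_pos f0_pos by auto
  then show ?thesis
    unfolding C_X sqrt_X c0_def k_\<sigma> by (simp add: field_simps)
qed

end

theorem mainTheorem3:
  fixes z :: real
  assumes "0 < z" and "z < 1"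
  shows "\<exists>g :: nat \<Rightarrow> real. g \<in> O[sequentially](\<lambda>r. 1 / real r) \<and>
           (\<forall>\<^sub>F r in sequentially. h r z = rho z ^ r * Cconst z * (1 + g r))"
proof -
  interpret Euler_cubic "1 - z"
    using assms by unfold_locales auto
  obtain M where "\<And>r. \<bar>remainder r\<bar> \<le> M / (2 * real r + 3)"
    using remainder_bound by blast
  then have "remainder \<in> O[sequentially](\<lambda>r. 1 / real r)"
    by (rule bigo_inverse_of_bound)
  moreover have "h r z = rho z ^ r * Cconst z * (1 + remainder r)" for r
    using h_eq_remainder[of r] rho_eq Cconst_eq by simp
  ultimately show ?thesis
    by (intro exI[of _ remainder] conjI always_eventually allI)
qed

end
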